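(* Let $N$ be a natural number, $P=\{a\subseteq N: |a|\geq 2\}$, and let $\|\cdot\|_3$ be the graph coloring norm on subsets of $P$ (defined in the context). Let $k\geq 1$ and let $A\subseteq P$ satisfy $\|A\|_3=k$. Then $|A|\geq\binom{2^{k-1}+1}{2}$.
   Context: $N=\{0,\ldots,N-1\}$. For $A\subseteq P$ and $z\subseteq N$ let $A\restriction z=\{a\in A: a\subseteq z\}$. The relation "$\|A\|_3\geq m$" is defined recursively: $\|A\|_3\geq 0$ always; $\|A\|_3\geq 1$ iff $A\neq\emptyset$; for $m\geq 1$, $\|A\|_3\geq m+1$ iff for every $z\subseteq N$ either $\|A\restriction z\|_3\geq m$ or $\|A\restriction(N\setminus z)\|_3\geq m$. Then $\|A\|_3$ is the largest $m$ with $\|A\|_3\geq m$. *)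

theory Defs
  imports Main
begin

text \<open>The ground set N is represented as {..<N} = {0,...,N-1}.\<close>

definition pairsP :: "nat \<Rightarrow> nat set set" where
  "pairsP N = {a. a \<subseteq> {..<N} \<and> card a \<ge> 2}"

definition restr :: "nat set set \<Rightarrow> nat set \<Rightarrow> nat set set" where
  "restr A z = {a \<in> A. a \<subseteq> z}"

fun norm3_ge :: "nat \<Rightarrow> nat set set \<Rightarrow> nat \<Rightarrow> bool" where
  "norm3_ge N A 0 = True"
| "norm3_ge N A (Suc 0) = (A \<noteq> {})"
| "norm3_ge N A (Suc (Suc m)) =
     (\<forall>z. z \<subseteq> {..<N} \<longrightarrow>
        norm3_ge N (restr A z) (Suc m) \<or> norm3_ge N (restr A ({..<N} - z)) (Suc m))"

definition norm3 :: "nat \<Rightarrow> nat set set \<Rightarrow> nat" where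
  "norm3 N A = (GREATEST m. norm3_ge N A m)"

end

theory Submission
  imports Defs
begin

text \<open>Read A as a hypergraph on {..<N}. Splitting a colouring with 2t colours into the colours
below t and those from t on shows that norm3 N A \<ge> n + 1 exactly when A has no proper
colouring with 2^n colours, so norm3 N A = k forces the chromatic number c of A to exceed 2^(k-1).
In a proper colouring with c colours every pair of colours {i, j} must be the set of colours of
some edge, for otherwise i and j could be merged into a colouring with c - 1 colours. Distinct
pairs are carried by distinct edges, so A has at least c choose 2 edges.\<close>

definition proper_colouring :: "('a \<Rightarrow> nat) \<Rightarrow> 'a set set \<Rightarrow> bool" where
  "proper_colouring f A \<longleftrightarrow> (\<forall>a\<in>A. \<exists>x\<in>a. \<exists>y\<in>a. f x \<noteq> f y)"

definition colourable :: "'a set set \<Rightarrow> nat \<Rightarrow> bool" where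
  "colourable A t \<longleftrightarrow> (\<exists>f. (\<forall>x. f x < t) \<and> proper_colouring f A)"

definition chromatic_number :: "'a set set \<Rightarrow> nat" where
  "chromatic_number A = (LEAST t. colourable A t)"

lemma proper_colouring_finer:
  assumes "proper_colouring f A"
    and "\<And>a x y. a \<in> A \<Longrightarrow> x \<in> a \<Longrightarrow> y \<in> a \<Longrightarrow> g x = g y \<Longrightarrow> f x = f y"
  shows "proper_colouring g A"
  using assms unfolding proper_colouring_def by metis

lemma colourable_mono: "colourable A t \<Longrightarrow> t \<le> t' \<Longrightarrow> colourable A t'"
  unfolding colourable_def by (meson less_le_trans)

lemma colourable_1_iff: "colourable A (Suc 0) \<longleftrightarrow> A = {}"
  unfolding colourable_def proper_colouring_def by auto

lemma Union_restr_subset: "\<Union>(restr A z) \<subseteq> z"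
  unfolding restr_def by auto

lemma colourable_restr_halves:
  assumes "colourable A (2 * t)"
  shows "\<exists>z\<subseteq>V. colourable (restr A z) t \<and> colourable (restr A (V - z)) t"
proof -
  obtain f where f_less: "\<forall>x. f x < 2 * t" and f_proper: "proper_colouring f A"
    using assms unfolding colourable_def by blast
  define z where "z = {x\<in>V. f x < t}"
  have f_proper_restr: "proper_colouring f (restr A w)" for w
    using f_proper unfolding proper_colouring_def restr_def by simp
  have "proper_colouring (\<lambda>x. if f x < t then f x else 0) (restr A z)"
    by (rule proper_colouring_finer[OF f_proper_restr])
      (auto simp: restr_def z_def subset_iff split: if_splits)
  then have low: "colourable (restr A z) t"
    unfolding colourable_def using f_less
    by (intro exI[of _ "\<lambda>x. if f x < t then f x else 0"]) (auto intro: gr_zeroI)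
  have "proper_colouring (\<lambda>x. f x - t) (restr A (V - z))"
    by (rule proper_colouring_finer[OF f_proper_restr])
      (auto simp: restr_def z_def subset_iff eq_diff_iff not_less)
  moreover have "f x - t < t" for x
    using f_less[rule_format, of x] by linarith
  ultimately have high: "colourable (restr A (V - z)) t"
    unfolding colourable_def by (intro exI[of _ "\<lambda>x. f x - t"]) simp
  show ?thesis
    using low high by (intro exI[of _ z]) (auto simp: z_def)
qed

lemma colourable_if_restr_halves:
  assumes "\<Union>A \<subseteq> V"
    and "colourable (restr A z) t" and "colourable (restr A (V - z)) t"
  shows "colourable A (2 * t)"
proof -
  obtain f1 where f1_less: "\<forall>x. f1 x < t" and f1_proper: "proper_colouring f1 (restr A z)"
    using assms(2) unfolding colourable_def by blast
  obtain f2 where f2_less: "\<forall>x. f2 x < t" and f2_proper: "proper_colouring f2 (restr A (V - z))"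
    using assms(3) unfolding colourable_def by blast
  define g where "g x = (if x \<in> z then f1 x else t + f2 x)" for x
  have "\<exists>x\<in>a. \<exists>y\<in>a. g x \<noteq> g y" if a: "a \<in> A" for a
  proof (cases "a \<subseteq> z \<or> a \<subseteq> V - z")
    case True
    then show ?thesis
      using a f1_proper f2_proper unfolding proper_colouring_def restr_def g_def
      by (auto simp: subset_iff)
  next
    case False
    then obtain x y where "x \<in> a" "x \<notin> z" "y \<in> a" "y \<in> z"
      using a assms(1) by blast
    then show ?thesis
      using f1_less unfolding g_def by (metis not_add_less1)
  qed
  moreover have "g x < 2 * t" for x
    using f1_less f2_less unfolding g_def by (metis add_strict_left_mono mult_2 trans_less_add1)
  ultimately show ?thesis
    unfolding colourable_def proper_colouring_def by blast
qed

lemma norm3_ge_Suc_iff: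
  assumes "\<Union>A \<subseteq> {..<N}"
  shows "norm3_ge N A (Suc n) \<longleftrightarrow> \<not> colourable A (2 ^ n)"
  using assms
proof (induction n arbitrary: A)
  case 0
  then show ?case by (simp add: colourable_1_iff)
next
  case (Suc n)
  have restr_edges: "\<Union>(restr A z) \<subseteq> {..<N}" if "z \<subseteq> {..<N}" for z
    using Union_restr_subset that by blast
  have "norm3_ge N A (Suc (Suc n)) \<longleftrightarrow>
      (\<forall>z\<subseteq>{..<N}. \<not> colourable (restr A z) (2 ^ n) \<or> \<not> colourable (restr A ({..<N} - z)) (2 ^ n))"
    using Suc.IH restr_edges by simp
  also have "\<dots> \<longleftrightarrow> \<not> colourable A (2 ^ Suc n)"
    using colourable_restr_halves[of A "2 ^ n" "{..<N}"] colourable_if_restr_halves[OF Suc.prems]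
    by auto
  finally show ?case .
qed

lemma colourable_pairsP:
  assumes "A \<subseteq> pairsP N"
  shows "colourable A (Suc N)"
proof -
  have "\<exists>x\<in>a. \<exists>y\<in>a. min x N \<noteq> min y N" if "a \<in> A" for a
  proof -
    have a: "a \<subseteq> {..<N}" "2 \<le> card a"
      using assms that unfolding pairsP_def by auto
    then have "\<not> card a \<le> Suc 0" by simp
    then obtain x y where "x \<in> a" "y \<in> a" "x \<noteq> y"
      using card_le_Suc0_iff_eq[OF finite_subset[OF a(1)]] by blast
    then show ?thesis
      using a(1) by (metis lessThan_iff min.strict_order_iff subsetD)
  qed
  then show ?thesis
    unfolding colourable_def proper_colouring_def by (intro exI[of _ "\<lambda>x. min x N"]) auto
qed

lemma norm3_ge_norm3:
  assumes "A \<subseteq> pairsP N"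
  shows "norm3_ge N A (norm3 N A)"
  unfolding norm3_def
proof (rule GreatestI_nat)
  show "norm3_ge N A 0" by simp
next
  fix m assume m: "norm3_ge N A m"
  show "m \<le> N"
  proof (cases m)
    case (Suc n)
    have edges: "\<Union>A \<subseteq> {..<N}"
      using assms unfolding pairsP_def by auto
    have "\<not> colourable A (2 ^ n)"
      using m Suc norm3_ge_Suc_iff[OF edges] by simp
    then have "2 ^ n < Suc N"
      using colourable_mono[OF colourable_pairsP[OF assms]] by (meson not_le)
    then show ?thesis
      using Suc less_exp[of n] by linarith
  qed simp
qed

lemma colourable_chromatic_number:
  "colourable A t \<Longrightarrow> colourable A (chromatic_number A)"
  unfolding chromatic_number_def by (rule LeastI)

lemma not_colourable_pred_chromatic_number:
  assumes "colourable A t"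
  shows "\<not> colourable A (chromatic_number A - 1)"
proof
  assume "colourable A (chromatic_number A - 1)"
  then have "chromatic_number A \<le> chromatic_number A - 1"
    unfolding chromatic_number_def by (rule Least_le)
  moreover have "chromatic_number A \<noteq> 0"
    using colourable_chromatic_number[OF assms] unfolding colourable_def by auto
  ultimately show False by simp
qed

lemma less_chromatic_number:
  "colourable A t \<Longrightarrow> \<not> colourable A s \<Longrightarrow> s < chromatic_number A"
  using colourable_chromatic_number colourable_mono by (meson not_le)

lemma colourable_merge_two_colours:
  assumes f_less: "\<forall>x. f x < c" and f_proper: "proper_colouring f A"
    and "i < j" and "j < c" and no_edge: "\<forall>a\<in>A. \<not> f ` a \<subseteq> {i, j}"
  shows "colourable A (c - 1)"
proof -
  \<comment> \<open>Colour j joins colour i, and the top colour c - 1 takes over the freed slot j.\<close>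
  define g :: "nat \<Rightarrow> nat" where "g w = (if w = j then i else if w = c - 1 then j else w)" for w
  have g_less: "g w < c - 1" if "w < c" for w
    using that \<open>i < j\<close> \<open>j < c\<close> unfolding g_def by auto
  have g_inj: "v = w" if "g v = g w" "v < c" "w < c" "w \<notin> {i, j}" for v w
    using that \<open>i < j\<close> \<open>j < c\<close> unfolding g_def by (auto split: if_splits)
  have "\<exists>x\<in>a. \<exists>y\<in>a. g (f x) \<noteq> g (f y)" if a: "a \<in> A" for a
  proof -
    obtain x where x: "x \<in> a" "f x \<notin> {i, j}"
      using no_edge a by auto
    obtain y where y: "y \<in> a" "f y \<noteq> f x"
      using f_proper a unfolding proper_colouring_def by metis
    show ?thesis
      using x y g_inj f_less by metis
  qed
  then show ?thesis
    unfolding colourable_def proper_colouring_def using f_less g_less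
    by (intro exI[of _ "g \<circ> f"]) auto
qed

lemma colour_pair_in_edge_colours:
  assumes f_less: "\<forall>x. f x < c" and f_proper: "proper_colouring f A"
    and not_colourable: "\<not> colourable A (c - 1)" and "i < j" and "j < c"
  shows "{i, j} \<in> (`) f ` A"
proof -
  obtain a where a: "a \<in> A" "f ` a \<subseteq> {i, j}"
    using colourable_merge_two_colours[OF f_less f_proper \<open>i < j\<close> \<open>j < c\<close>] not_colourable
    by blast
  obtain x y where "x \<in> a" "y \<in> a" "f x \<noteq> f y"
    using f_proper a(1) unfolding proper_colouring_def by blast
  then have "f ` a = {i, j}"
    using a(2) by blast
  then show ?thesis
    using a(1) by blast
qed

lemma choose_2_le_card_if_colour_critical:
  assumes "finite A" and "colourable A c" and "\<not> colourable A (c - 1)"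
  shows "c choose 2 \<le> card A"
proof -
  obtain f where f_less: "\<forall>x. f x < c" and f_proper: "proper_colouring f A"
    using assms(2) unfolding colourable_def by blast
  have "s \<in> (`) f ` A" if s: "s \<subseteq> {..<c}" "card s = 2" for s
  proof -
    obtain i j where "s = {i, j}" "i < j"
      using s(2) unfolding card_2_iff by (metis insert_commute linorder_neq_iff)
    then show ?thesis
      using colour_pair_in_edge_colours[OF f_less f_proper assms(3)] s(1) by auto
  qed
  then have "card {s. s \<subseteq> {..<c} \<and> card s = 2} \<le> card ((`) f ` A)"
    using assms(1) by (intro card_mono) auto
  also have "\<dots> \<le> card A"
    using assms(1) by (rule card_image_le)
  finally show ?thesis
    by (simp add: n_subsets)
qed

theorem theorem5p36:
  fixes N k :: nat and A :: "nat set set"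
  assumes "A \<subseteq> pairsP N" and "k \<ge> 1" and "norm3 N A = k"
  shows "card A \<ge> (2 ^ (k - 1) + 1) choose 2"
proof -
  have edges: "\<Union>A \<subseteq> {..<N}"
    using assms(1) unfolding pairsP_def by auto
  have "norm3_ge N A (Suc (k - 1))"
    using norm3_ge_norm3[OF assms(1)] assms(2,3) by simp
  then have "\<not> colourable A (2 ^ (k - 1))"
    using norm3_ge_Suc_iff[OF edges] by simp
  then have "2 ^ (k - 1) < chromatic_number A"
    using less_chromatic_number colourable_pairsP[OF assms(1)] by blast
  then have "(2 ^ (k - 1) + 1) choose 2 \<le> chromatic_number A choose 2"
    by (intro binomial_right_mono) simp
  also have "\<dots> \<le> card A"
  proof (rule choose_2_le_card_if_colour_critical)
    show "finite A"
      using edges by (meson finite_UnionD finite_lessThan finite_subset)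
    show "colourable A (chromatic_number A)" "\<not> colourable A (chromatic_number A - 1)"
      using colourable_chromatic_number not_colourable_pred_chromatic_number
        colourable_pairsP[OF assms(1)] by blast+
  qed
  finally show ?thesis .
qed

end
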